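(* Let $n\ge0$ and $k\ge1$ be integers and let $T$ be a completely non-unitary contraction on a separable infinite-dimensional complex Hilbert space $\mathcal{H}$ such that $\mathcal{D}_T\subseteq\mathcal{D}_{T^*}$, $\dim\mathcal{D}_{T^*}<\infty$, $\dim\mathcal{D}_T=n+1$ and $\dim(\mathcal{D}_{T^*}\ominus\mathcal{D}_T)=k$. Assume there is an orthonormal basis $\{e_m\}_{m\ge0}$ of $\mathcal{H}$ and scalars $a_{ij}$ ($0\le i\le n+k$, $0\le j\le n$) such that $Te_j=\sum_{i=0}^{n+k}a_{ij}e_i$ for $0\le j\le n$ and $Te_j=e_{j+k}$ for $j\ge n+1$. Let $A_1=(a_{ij})_{0\le i,j\le n}$. Then $T$ has no non-zero eigenvalue if and only if for every eigenvector $(h_0,\dots,h_n)\in\mathbb{C}^{n+1}$ of $A_1$ corresponding to a non-zero eigenvalue, there exists $l\in\{1,\dots,k\}$ with $\sum_{r=0}^{n}a_{n+l,r}h_r\neq 0$.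
   Context: For a contraction $T$ on $\mathcal{H}$, $\mathcal{D}_T=\overline{(I-T^*T)^{1/2}\mathcal{H}}$ and $\mathcal{D}_{T^*}=\overline{(I-TT^* )^{1/2}\mathcal{H}}$. A contraction is completely non-unitary if it has no nonzero reducing subspace on which it is unitary. *)

theory Defs
  imports Complex_Main
begin

text \<open>The Hilbert space: l2(N) of square-summable complex sequences,
  modelled as a set of functions nat => complex.\<close>

type_synonym vec = "nat \<Rightarrow> complex"
type_synonym op = "vec \<Rightarrow> vec"

definition l2 :: "vec set" where
  "l2 = {x. summable (\<lambda>i. (cmod (x i))\<^sup>2)}"

definition l2inner :: "vec \<Rightarrow> vec \<Rightarrow> complex" where
  "l2inner x y = (\<Sum>i. x i * cnj (y i))"

definition l2norm :: "vec \<Rightarrow> real" where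
  "l2norm x = sqrt (\<Sum>i. (cmod (x i))\<^sup>2)"

definition vadd :: "vec \<Rightarrow> vec \<Rightarrow> vec" where
  "vadd x y = (\<lambda>i. x i + y i)"

definition vsub :: "vec \<Rightarrow> vec \<Rightarrow> vec" where
  "vsub x y = (\<lambda>i. x i - y i)"

definition vscale :: "complex \<Rightarrow> vec \<Rightarrow> vec" where
  "vscale c x = (\<lambda>i. c * x i)"

definition vzero :: vec where
  "vzero = (\<lambda>i. 0)"

definition l2closure :: "vec set \<Rightarrow> vec set" where
  "l2closure S = {x \<in> l2. \<forall>\<epsilon>>0. \<exists>y\<in>S. l2norm (vsub x y) < \<epsilon>}"

definition subspace_l2 :: "vec set \<Rightarrow> bool" where
  "subspace_l2 M \<longleftrightarrow> M \<subseteq> l2 \<and> vzero \<in> M \<and>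
     (\<forall>x\<in>M. \<forall>y\<in>M. vadd x y \<in> M) \<and> (\<forall>c. \<forall>x\<in>M. vscale c x \<in> M)"

definition closed_subspace_l2 :: "vec set \<Rightarrow> bool" where
  "closed_subspace_l2 M \<longleftrightarrow> subspace_l2 M \<and> l2closure M = M"

text \<open>Bounded linear operators on l2 (only their values on l2 matter).\<close>
definition bounded_linear_l2 :: "op \<Rightarrow> bool" where
  "bounded_linear_l2 T \<longleftrightarrow>
     (\<forall>x\<in>l2. T x \<in> l2) \<and>
     (\<forall>x\<in>l2. \<forall>y\<in>l2. T (vadd x y) = vadd (T x) (T y)) \<and>
     (\<forall>c. \<forall>x\<in>l2. T (vscale c x) = vscale c (T x)) \<and>
     (\<exists>C. \<forall>x\<in>l2. l2norm (T x) \<le> C * l2norm x)"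

definition is_adjoint :: "op \<Rightarrow> op \<Rightarrow> bool" where
  "is_adjoint T S \<longleftrightarrow> bounded_linear_l2 S \<and>
     (\<forall>x\<in>l2. \<forall>y\<in>l2. l2inner (T x) y = l2inner x (S y))"

definition adj :: "op \<Rightarrow> op" where
  "adj T = (SOME S. is_adjoint T S)"

definition contraction :: "op \<Rightarrow> bool" where
  "contraction T \<longleftrightarrow> bounded_linear_l2 T \<and> (\<forall>x\<in>l2. l2norm (T x) \<le> l2norm x)"

definition positive_op :: "op \<Rightarrow> bool" where
  "positive_op S \<longleftrightarrow> bounded_linear_l2 S \<and>
     (\<forall>x\<in>l2. Im (l2inner (S x) x) = 0 \<and> Re (l2inner (S x) x) \<ge> 0)"

definition op_sqrt :: "op \<Rightarrow> op" where
  "op_sqrt A = (SOME S. positive_op S \<and> (\<forall>x\<in>l2. S (S x) = A x))"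

definition defect_space :: "op \<Rightarrow> vec set" where
  "defect_space T = l2closure (op_sqrt (\<lambda>x. vsub x (adj T (T x))) ` l2)"

definition defect_space_star :: "op \<Rightarrow> vec set" where
  "defect_space_star T = l2closure (op_sqrt (\<lambda>x. vsub x (T (adj T x))) ` l2)"

definition ominus :: "vec set \<Rightarrow> vec set \<Rightarrow> vec set" where
  "ominus M N = {x \<in> M. \<forall>y\<in>N. l2inner x y = 0}"

definition has_dim :: "vec set \<Rightarrow> nat \<Rightarrow> bool" where
  "has_dim V d \<longleftrightarrow> (\<exists>b :: nat \<Rightarrow> vec.
      (\<forall>c :: nat \<Rightarrow> complex. (\<lambda>m. \<Sum>i<d. c i * b i m) = vzero \<longrightarrow> (\<forall>i<d. c i = 0)) \<and>
      V = {(\<lambda>m. \<Sum>i<d. c i * b i m) | c. True})"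

definition finite_dim :: "vec set \<Rightarrow> bool" where
  "finite_dim V \<longleftrightarrow> (\<exists>d. has_dim V d)"

definition reducing :: "op \<Rightarrow> vec set \<Rightarrow> bool" where
  "reducing T M \<longleftrightarrow> closed_subspace_l2 M \<and> T ` M \<subseteq> M \<and> adj T ` M \<subseteq> M"

definition unitary_on :: "op \<Rightarrow> vec set \<Rightarrow> bool" where
  "unitary_on T M \<longleftrightarrow> (\<forall>x\<in>M. l2norm (T x) = l2norm x) \<and> T ` M = M"

definition cnu :: "op \<Rightarrow> bool" where
  "cnu T \<longleftrightarrow> \<not> (\<exists>M. reducing T M \<and> M \<noteq> {vzero} \<and> unitary_on T M)"

definition l2span :: "(nat \<Rightarrow> vec) \<Rightarrow> vec set" where
  "l2span e = {(\<lambda>m. \<Sum>i\<in>F. c i * e i m) | F c. finite F}"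

definition orthonormal_basis :: "(nat \<Rightarrow> vec) \<Rightarrow> bool" where
  "orthonormal_basis e \<longleftrightarrow> (\<forall>i. e i \<in> l2) \<and>
     (\<forall>i j. l2inner (e i) (e j) = (if i = j then 1 else 0)) \<and>
     l2closure (l2span e) = l2"

definition has_eigenvalue :: "op \<Rightarrow> complex \<Rightarrow> bool" where
  "has_eigenvalue T c \<longleftrightarrow> (\<exists>x\<in>l2. x \<noteq> vzero \<and> T x = vscale c x)"

end

theory Submission imports Defs "HOL-Analysis.L2_Norm" begin

text \<open>Only the matrix of \<open>T\<close> and \<open>\<parallel>T\<parallel> \<le> 1\<close> matter. Let \<open>T x = \<lambda> x\<close>, \<open>\<lambda> \<noteq> 0\<close>, and
  \<open>c\<^sub>m = \<langle>x, e\<^sub>m\<rangle>\<close>. For \<open>m > n\<close> the shift columns give \<open>c\<^sub>m = \<lambda> c\<^sub>m\<^sub>+\<^sub>k\<close>, so with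
  \<open>|\<lambda>| \<le> 1\<close> the moduli \<open>|c\<^sub>m|, |c\<^sub>m\<^sub>+\<^sub>k|, |c\<^sub>m\<^sub>+\<^sub>2\<^sub>k|, \<dots>\<close> do not decrease; since the
  coefficients of a vector tend to \<open>0\<close>, \<open>c\<^sub>m = 0\<close> for all \<open>m > n\<close>. Hence \<open>(c\<^sub>0, \<dots>, c\<^sub>n)\<close>
  is an eigenvector of \<open>A\<^sub>1\<close> for \<open>\<lambda>\<close>, and rows \<open>n + 1, \<dots>, n + k\<close> of \<open>T x = \<lambda> x\<close> say
  \<open>\<Sum>\<^sub>r a\<^sub>n\<^sub>+\<^sub>l\<^sub>,\<^sub>r c\<^sub>r = \<lambda> c\<^sub>n\<^sub>+\<^sub>l = 0\<close>. Conversely an eigenvector \<open>h\<close> of \<open>A\<^sub>1\<close> annihilated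
  by these rows gives the eigenvector \<open>\<Sum>\<^sub>r h\<^sub>r e\<^sub>r\<close> of \<open>T\<close>.\<close>

lemma l2_iff: "x \<in> l2 \<longleftrightarrow> summable (\<lambda>i. (cmod (x i))\<^sup>2)"
  by (simp add: l2_def)

lemma l2_vadd:
  assumes "x \<in> l2" "y \<in> l2"
  shows "vadd x y \<in> l2"
proof -
  have sq: "(cmod (a + b))\<^sup>2 \<le> 2 * (cmod a)\<^sup>2 + 2 * (cmod b)\<^sup>2" for a b :: complex
  proof -
    have "(cmod (a + b))\<^sup>2 \<le> (cmod a + cmod b)\<^sup>2"
      by (simp add: power_mono norm_triangle_ineq)
    also have "\<dots> \<le> 2 * (cmod a)\<^sup>2 + 2 * (cmod b)\<^sup>2"
      using zero_le_power2[of "cmod a - cmod b"] unfolding power2_diff power2_sum by linarith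
    finally show ?thesis .
  qed
  show ?thesis
    unfolding l2_iff vadd_def
  proof (rule summable_comparison_test'[where N=0 and g="\<lambda>i. 2 * (cmod (x i))\<^sup>2 + 2 * (cmod (y i))\<^sup>2"])
    show "summable (\<lambda>i. 2 * (cmod (x i))\<^sup>2 + 2 * (cmod (y i))\<^sup>2)"
      using assms unfolding l2_iff by (intro summable_add summable_mult)
    show "norm ((cmod (x i + y i))\<^sup>2) \<le> 2 * (cmod (x i))\<^sup>2 + 2 * (cmod (y i))\<^sup>2" for i
      using sq by simp
  qed
qed

lemma l2_vscale: "x \<in> l2 \<Longrightarrow> vscale c x \<in> l2"
  unfolding l2_iff vscale_def by (simp add: norm_mult power_mult_distrib summable_mult)

lemma l2_vzero: "vzero \<in> l2"
  by (simp add: l2_iff vzero_def)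

lemma l2_vsub: "x \<in> l2 \<Longrightarrow> y \<in> l2 \<Longrightarrow> vsub x y \<in> l2"
proof -
  have "vsub x y = vadd x (vscale (-1) y)"
    by (simp add: vsub_def vadd_def vscale_def)
  then show "x \<in> l2 \<Longrightarrow> y \<in> l2 \<Longrightarrow> vsub x y \<in> l2"
    by (simp add: l2_vadd l2_vscale)
qed

lemma lincomb_insert:
  "finite F \<Longrightarrow> a \<notin> F \<Longrightarrow>
    (\<lambda>m. \<Sum>i\<in>insert a F. c i * v i m) = vadd (vscale (c a) (v a)) (\<lambda>m. \<Sum>i\<in>F. c i * v i m)"
  unfolding vadd_def vscale_def by (intro ext) simp

lemma l2_lincomb:
  "finite F \<Longrightarrow> (\<And>i. i \<in> F \<Longrightarrow> v i \<in> l2) \<Longrightarrow> (\<lambda>m. \<Sum>i\<in>F. c i * v i m) \<in> l2"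
proof (induction F rule: finite_induct)
  case empty
  then show ?case using l2_vzero by (simp add: vzero_def)
next
  case (insert a F)
  then show ?case
    unfolding lincomb_insert[OF insert.hyps] by (intro l2_vadd l2_vscale) simp_all
qed

lemma l2inner_summable_norm:
  assumes "x \<in> l2" "y \<in> l2"
  shows "summable (\<lambda>i. cmod (x i * cnj (y i)))"
proof (rule summable_comparison_test'[where N=0 and g="\<lambda>i. ((cmod (x i))\<^sup>2 + (cmod (y i))\<^sup>2) / 2"])
  show "summable (\<lambda>i. ((cmod (x i))\<^sup>2 + (cmod (y i))\<^sup>2) / 2)"
    using assms unfolding l2_iff by (intro summable_divide summable_add)
  show "norm (cmod (x i * cnj (y i))) \<le> ((cmod (x i))\<^sup>2 + (cmod (y i))\<^sup>2) / 2" for i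
    using zero_le_power2[of "cmod (x i) - cmod (y i)"] by (simp add: norm_mult power2_diff)
qed

lemma l2inner_summable: "x \<in> l2 \<Longrightarrow> y \<in> l2 \<Longrightarrow> summable (\<lambda>i. x i * cnj (y i))"
  by (rule summable_norm_cancel) (rule l2inner_summable_norm)

lemma l2inner_lincomb_left:
  assumes "finite F" "\<And>i. i \<in> F \<Longrightarrow> v i \<in> l2" "z \<in> l2"
  shows "l2inner (\<lambda>m. \<Sum>i\<in>F. c i * v i m) z = (\<Sum>i\<in>F. c i * l2inner (v i) z)"
proof -
  have "l2inner (\<lambda>m. \<Sum>i\<in>F. c i * v i m) z = (\<Sum>m. \<Sum>i\<in>F. c i * (v i m * cnj (z m)))"
    unfolding l2inner_def by (simp add: sum_distrib_right mult.assoc)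
  also have "\<dots> = (\<Sum>i\<in>F. \<Sum>m. c i * (v i m * cnj (z m)))"
    by (rule suminf_sum) (use assms l2inner_summable summable_mult in blast)
  also have "\<dots> = (\<Sum>i\<in>F. c i * l2inner (v i) z)"
    unfolding l2inner_def using assms l2inner_summable by (intro sum.cong refl suminf_mult) blast
  finally show ?thesis .
qed

lemma l2inner_lincomb_right:
  assumes "finite F" "\<And>i. i \<in> F \<Longrightarrow> v i \<in> l2" "z \<in> l2"
  shows "l2inner z (\<lambda>m. \<Sum>i\<in>F. c i * v i m) = (\<Sum>i\<in>F. cnj (c i) * l2inner z (v i))"
proof -
  have "l2inner z (\<lambda>m. \<Sum>i\<in>F. c i * v i m) = (\<Sum>m. \<Sum>i\<in>F. cnj (c i) * (z m * cnj (v i m)))"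
    unfolding l2inner_def by (simp add: sum_distrib_left mult.assoc mult.left_commute)
  also have "\<dots> = (\<Sum>i\<in>F. \<Sum>m. cnj (c i) * (z m * cnj (v i m)))"
    by (rule suminf_sum) (use assms l2inner_summable summable_mult in blast)
  also have "\<dots> = (\<Sum>i\<in>F. cnj (c i) * l2inner z (v i))"
    unfolding l2inner_def using assms l2inner_summable by (intro sum.cong refl suminf_mult) blast
  finally show ?thesis .
qed

lemma l2inner_vadd_left:
  assumes "x \<in> l2" "y \<in> l2" "z \<in> l2"
  shows "l2inner (vadd x y) z = l2inner x z + l2inner y z"
proof -
  have "l2inner (vadd x y) z = (\<Sum>i. x i * cnj (z i) + y i * cnj (z i))"
    unfolding l2inner_def vadd_def by (simp add: distrib_right)
  also have "\<dots> = l2inner x z + l2inner y z"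
    unfolding l2inner_def by (rule suminf_add[symmetric]) (use assms l2inner_summable in auto)
  finally show ?thesis .
qed

lemma l2inner_vscale_left:
  assumes "x \<in> l2" "z \<in> l2"
  shows "l2inner (vscale c x) z = c * l2inner x z"
proof -
  have "l2inner (vscale c x) z = (\<Sum>i. c * (x i * cnj (z i)))"
    unfolding l2inner_def vscale_def by (simp add: mult.assoc)
  also have "\<dots> = c * l2inner x z"
    unfolding l2inner_def by (rule suminf_mult) (use assms l2inner_summable in auto)
  finally show ?thesis .
qed

lemma l2inner_commute: "x \<in> l2 \<Longrightarrow> y \<in> l2 \<Longrightarrow> l2inner y x = cnj (l2inner x y)"
proof -
  assume "x \<in> l2" "y \<in> l2"
  then have "(\<lambda>i. x i * cnj (y i)) sums l2inner x y"
    unfolding l2inner_def by (intro summable_sums l2inner_summable)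
  then have "(\<lambda>i. y i * cnj (x i)) sums cnj (l2inner x y)"
    using sums_cnj[of "\<lambda>i. x i * cnj (y i)"] by (simp add: mult.commute)
  then show ?thesis
    unfolding l2inner_def by (rule sums_unique[symmetric])
qed

lemma l2norm_power2: "x \<in> l2 \<Longrightarrow> (l2norm x)\<^sup>2 = (\<Sum>i. (cmod (x i))\<^sup>2)"
  unfolding l2norm_def l2_iff by (simp add: suminf_nonneg)

lemma l2norm_nonneg: "x \<in> l2 \<Longrightarrow> 0 \<le> l2norm x"
  unfolding l2norm_def l2_iff by (simp add: suminf_nonneg)

lemma l2inner_self: "x \<in> l2 \<Longrightarrow> l2inner x x = complex_of_real ((l2norm x)\<^sup>2)"
  unfolding l2inner_def l2_iff
  by (simp only: complex_norm_square l2norm_power2[unfolded l2_iff] suminf_of_real)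

lemma l2norm_eq_0: "x \<in> l2 \<Longrightarrow> l2norm x = 0 \<Longrightarrow> x = vzero"
proof -
  assume "x \<in> l2" "l2norm x = 0"
  then have "(\<Sum>i. (cmod (x i))\<^sup>2) = 0" "summable (\<lambda>i. (cmod (x i))\<^sup>2)"
    using l2norm_power2[of x] by (auto simp: l2_iff)
  then have "\<forall>i. (cmod (x i))\<^sup>2 = 0" by (subst (asm) suminf_eq_zero_iff) auto
  then show ?thesis by (auto simp: vzero_def)
qed

lemma l2norm_vscale: "x \<in> l2 \<Longrightarrow> l2norm (vscale c x) = cmod c * l2norm x"
  unfolding l2norm_def vscale_def l2_iff
  by (simp add: norm_mult power_mult_distrib suminf_mult real_sqrt_mult)

lemma l2inner_Cauchy_Schwarz:
  assumes "x \<in> l2" "y \<in> l2"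
  shows "cmod (l2inner x y) \<le> l2norm x * l2norm y"
proof -
  have s: "summable (\<lambda>i. cmod (x i * cnj (y i)))"
    using assms by (rule l2inner_summable_norm)
  have "cmod (l2inner x y) \<le> (\<Sum>i. cmod (x i * cnj (y i)))"
    unfolding l2inner_def using s by (rule summable_norm)
  also have "\<dots> \<le> l2norm x * l2norm y"
  proof (rule suminf_le_const[OF s])
    fix N
    have "(\<Sum>i<N. cmod (x i * cnj (y i))) = (\<Sum>i<N. \<bar>cmod (x i)\<bar> * \<bar>cmod (y i)\<bar>)"
      by (simp add: norm_mult)
    also have "\<dots> \<le> L2_set (\<lambda>i. cmod (x i)) {..<N} * L2_set (\<lambda>i. cmod (y i)) {..<N}"
      by (rule L2_set_mult_ineq)
    also have "\<dots> \<le> l2norm x * l2norm y"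
      unfolding L2_set_def l2norm_def using assms unfolding l2_iff
      by (intro mult_mono real_sqrt_le_mono sum_le_suminf) (auto intro: suminf_nonneg sum_nonneg)
    finally show "(\<Sum>i<N. cmod (x i * cnj (y i))) \<le> l2norm x * l2norm y" .
  qed
  finally show ?thesis .
qed

lemma orthonormal_basis_l2: "orthonormal_basis e \<Longrightarrow> e i \<in> l2"
  by (simp add: orthonormal_basis_def)

lemma orthonormal_basis_l2inner:
  "orthonormal_basis e \<Longrightarrow> l2inner (e i) (e j) = (if i = j then 1 else 0)"
  by (simp add: orthonormal_basis_def)

lemma orthonormal_basis_l2norm: "orthonormal_basis e \<Longrightarrow> l2norm (e i) = 1"
proof -
  assume e: "orthonormal_basis e"
  then have "(l2norm (e i))\<^sup>2 = 1"
    using l2inner_self orthonormal_basis_l2 orthonormal_basis_l2inner by (metis of_real_eq_1_iff)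
  then show ?thesis
    using l2norm_nonneg[OF orthonormal_basis_l2[OF e, of i]] by (auto simp: power2_eq_1_iff)
qed

lemma orthonormal_basis_functional_eq_0:
  assumes e: "orthonormal_basis e"
    and add: "\<And>x y. x \<in> l2 \<Longrightarrow> y \<in> l2 \<Longrightarrow> F (vadd x y) = F x + F y"
    and scale: "\<And>c x. x \<in> l2 \<Longrightarrow> F (vscale c x) = c * F x"
    and bound: "\<And>x. x \<in> l2 \<Longrightarrow> cmod (F x) \<le> C * l2norm x"
    and basis: "\<And>j. F (e j) = 0"
    and x: "x \<in> l2"
  shows "F x = 0"
proof (rule ccontr)
  assume nz: "F x \<noteq> 0"
  note el = orthonormal_basis_l2[OF e]
  have C: "0 \<le> C"
    using bound[OF el, of 0] basis[of 0] by (simp add: orthonormal_basis_l2norm[OF e])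
  have span: "F (\<lambda>m. \<Sum>i\<in>G. c i * e i m) = 0" if "finite G" for G c
    using that
  proof (induction G rule: finite_induct)
    case empty
    have "vzero = vscale 0 vzero" by (simp add: vscale_def vzero_def)
    then show ?case using scale[OF l2_vzero, of 0] by (simp add: vzero_def)
  next
    case (insert a G)
    show ?case
      unfolding lincomb_insert[OF insert.hyps] using insert.IH insert.hyps(1)
      by (simp add: add l2_vscale l2_lincomb el scale basis)
  qed
  define \<epsilon> where "\<epsilon> = cmod (F x) / (C + 1)"
  have "\<epsilon> > 0" using nz C by (simp add: \<epsilon>_def)
  moreover have "x \<in> l2closure (l2span e)" using e x by (simp add: orthonormal_basis_def)
  ultimately obtain G c where G: "finite G" and
    close: "l2norm (vsub x (\<lambda>m. \<Sum>i\<in>G. c i * e i m)) < \<epsilon>"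
    unfolding l2closure_def l2span_def by blast
  define y where "y = (\<lambda>m. \<Sum>i\<in>G. c i * e i m)"
  have y: "y \<in> l2" using G by (simp add: y_def l2_lincomb el)
  have "x = vadd (vsub x y) y" by (simp add: vadd_def vsub_def)
  then have "F x = F (vsub x y)"
    using add[OF l2_vsub[OF x y] y] span[OF G] by (simp add: y_def)
  then have "cmod (F x) \<le> C * l2norm (vsub x y)"
    using bound[OF l2_vsub[OF x y]] by simp
  also have "\<dots> \<le> C * \<epsilon>" using close C by (simp add: y_def mult_left_mono)
  also have "\<dots> < cmod (F x)" using nz C by (simp add: \<epsilon>_def field_simps)
  finally show False by simp
qed

lemma orthonormal_basis_eq_vzero:
  assumes e: "orthonormal_basis e" and x: "x \<in> l2" and coeffs: "\<And>j. l2inner x (e j) = 0"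
  shows "x = vzero"
proof -
  note el = orthonormal_basis_l2[OF e]
  have "l2inner x x = 0"
  proof (rule orthonormal_basis_functional_eq_0[OF e, where F="\<lambda>y. l2inner y x" and C="l2norm x"])
    show "cmod (l2inner y x) \<le> l2norm x * l2norm y" if "y \<in> l2" for y
      using l2inner_Cauchy_Schwarz[OF that x] by (simp add: mult.commute)
    show "l2inner (e j) x = 0" for j
      using l2inner_commute[OF x el] coeffs by simp
  qed (use x in \<open>simp_all add: l2inner_vadd_left l2inner_vscale_left\<close>)
  then show ?thesis using l2inner_self[OF x] l2norm_eq_0[OF x] by simp
qed

lemma Bessel_inequality:
  assumes e: "orthonormal_basis e" and x: "x \<in> l2" and G: "finite G"
  shows "(\<Sum>m\<in>G. (cmod (l2inner x (e m)))\<^sup>2) \<le> (l2norm x)\<^sup>2"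
proof -
  note el = orthonormal_basis_l2[OF e] and orth = orthonormal_basis_l2inner[OF e]
  define c where "c m = l2inner x (e m)" for m
  define y where "y = (\<lambda>i. \<Sum>m\<in>G. c m * e m i)"
  define S where "S = (\<Sum>m\<in>G. (cmod (c m))\<^sup>2)"
  have y: "y \<in> l2" unfolding y_def using G el by (simp add: l2_lincomb)
  have cc: "c m * cnj (c m) = complex_of_real ((cmod (c m))\<^sup>2)" for m
    by (simp only: complex_norm_square)
  txt \<open>\<open>y\<close> is the projection of \<open>x\<close> onto the span of \<open>e ` G\<close>, so
    \<open>\<parallel>y\<parallel>\<^sup>2 = S = \<langle>x, y\<rangle> \<le> \<parallel>x\<parallel> \<parallel>y\<parallel>\<close>.\<close>
  have "l2inner x y = (\<Sum>m\<in>G. cnj (c m) * c m)"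
    unfolding y_def using G el x by (simp add: l2inner_lincomb_right c_def)
  also have "\<dots> = complex_of_real S"
    unfolding S_def using cc by (simp add: mult.commute)
  finally have "cmod (complex_of_real S) \<le> l2norm x * l2norm y"
    using l2inner_Cauchy_Schwarz[OF x y] by simp
  then have xy: "S \<le> l2norm x * l2norm y" by simp
  have "l2inner (e m) y = cnj (c m)" if "m \<in> G" for m
    unfolding y_def using G el that by (simp add: l2inner_lincomb_right orth if_distrib cong: if_cong)
  then have "l2inner y y = (\<Sum>m\<in>G. c m * cnj (c m))"
    using l2inner_lincomb_left[OF G, of e y c] el y unfolding y_def by simp
  also have "\<dots> = complex_of_real S" unfolding S_def using cc by simp
  finally have yS: "(l2norm y)\<^sup>2 = S"
    using l2inner_self[OF y] by (metis of_real_eq_iff)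
  have "l2norm y \<le> l2norm x"
    using xy yS l2norm_nonneg[OF y] l2norm_nonneg[OF x]
    by (metis power2_eq_square mult_right_le_imp_le less_eq_real_def)
  then show ?thesis
    using yS l2norm_nonneg[OF y] unfolding S_def c_def by (metis power_mono)
qed

lemma orthonormal_basis_coefficients_tendsto_0:
  assumes "orthonormal_basis e" "x \<in> l2"
  shows "(\<lambda>m. l2inner x (e m)) \<longlonglongrightarrow> 0"
proof -
  have "summable (\<lambda>m. (cmod (l2inner x (e m)))\<^sup>2)"
    by (rule summableI_nonneg_bounded) (use Bessel_inequality[OF assms] in auto)
  then have "(\<lambda>m. sqrt ((cmod (l2inner x (e m)))\<^sup>2)) \<longlonglongrightarrow> 0"
    using summable_LIMSEQ_zero tendsto_real_sqrt by fastforce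
  then show ?thesis by (simp add: tendsto_norm_zero_iff)
qed

lemma bounded_linear_l2_lincomb:
  assumes T: "bounded_linear_l2 T"
  shows "finite F \<Longrightarrow> (\<And>i. i \<in> F \<Longrightarrow> v i \<in> l2) \<Longrightarrow>
    T (\<lambda>m. \<Sum>i\<in>F. c i * v i m) = (\<lambda>m. \<Sum>i\<in>F. c i * T (v i) m)"
proof (induction F rule: finite_induct)
  case empty
  have "T vzero = T (vscale 0 vzero)" by (simp add: vscale_def vzero_def)
  also have "\<dots> = vscale 0 (T vzero)" using T l2_vzero unfolding bounded_linear_l2_def by blast
  finally show ?case by (simp add: vscale_def vzero_def)
next
  case (insert a F)
  then have "v a \<in> l2" "(\<lambda>m. \<Sum>i\<in>F. c i * v i m) \<in> l2" by (simp_all add: l2_lincomb)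
  then show ?case
    unfolding lincomb_insert[OF insert.hyps] using T insert
    by (simp add: l2_vscale bounded_linear_l2_def)
qed

text \<open>Hypothesis \<open>row\<close> says that row \<open>m\<close> of the matrix of \<open>T\<close> is \<open>w\<close> on \<open>S\<close> and \<open>0\<close> elsewhere.\<close>
lemma bounded_linear_l2_row:
  assumes T: "bounded_linear_l2 T" and e: "orthonormal_basis e" and S: "finite S"
    and row: "\<And>j. l2inner (T (e j)) (e m) = (\<Sum>j'\<in>S. w j' * l2inner (e j) (e j'))"
    and x: "x \<in> l2"
  shows "l2inner (T x) (e m) = (\<Sum>j'\<in>S. w j' * l2inner x (e j'))"
proof -
  note el = orthonormal_basis_l2[OF e]
  obtain C where C: "\<And>z. z \<in> l2 \<Longrightarrow> l2norm (T z) \<le> C * l2norm z"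
    using T unfolding bounded_linear_l2_def by blast
  have Tl: "\<And>z. z \<in> l2 \<Longrightarrow> T z \<in> l2" using T by (simp add: bounded_linear_l2_def)
  define F where "F z = l2inner (T z) (e m) - (\<Sum>j'\<in>S. w j' * l2inner z (e j'))" for z
  have "F x = 0"
  proof (rule orthonormal_basis_functional_eq_0[OF e, where F=F and C="C + (\<Sum>j'\<in>S. cmod (w j'))"])
    show "F (vadd y z) = F y + F z" if "y \<in> l2" "z \<in> l2" for y z
      using that T unfolding F_def
      by (simp add: bounded_linear_l2_def l2inner_vadd_left el distrib_left sum.distrib)
    show "F (vscale c y) = c * F y" if "y \<in> l2" for c y
      using that T unfolding F_def
      by (simp add: bounded_linear_l2_def l2inner_vscale_left el right_diff_distrib
          sum_distrib_left mult.left_commute)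
    show "cmod (F z) \<le> (C + (\<Sum>j'\<in>S. cmod (w j'))) * l2norm z" if z: "z \<in> l2" for z
    proof -
      have "cmod (l2inner (T z) (e m)) \<le> l2norm (T z)"
        using l2inner_Cauchy_Schwarz[OF Tl[OF z] el] by (simp add: orthonormal_basis_l2norm[OF e])
      also have "\<dots> \<le> C * l2norm z" by (rule C[OF z])
      finally have "cmod (l2inner (T z) (e m)) \<le> C * l2norm z" .
      moreover have "cmod (w j' * l2inner z (e j')) \<le> cmod (w j') * l2norm z" for j'
        using l2inner_Cauchy_Schwarz[OF z el]
        by (simp add: norm_mult mult_left_mono orthonormal_basis_l2norm[OF e])
      then have "cmod (\<Sum>j'\<in>S. w j' * l2inner z (e j')) \<le> (\<Sum>j'\<in>S. cmod (w j') * l2norm z)"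
        by (auto intro!: order_trans[OF norm_sum] sum_mono)
      ultimately show ?thesis
        unfolding F_def distrib_right sum_distrib_right
        using norm_triangle_ineq4[of "l2inner (T z) (e m)" "\<Sum>j'\<in>S. w j' * l2inner z (e j')"]
        by linarith
    qed
    show "F (e j) = 0" for j using row[of j] unfolding F_def by simp
  qed (rule x)
  then show ?thesis unfolding F_def by simp
qed

lemma null_sequence_shift_recurrence_eq_0:
  fixes c :: "nat \<Rightarrow> complex"
  assumes lim: "c \<longlonglongrightarrow> 0" and \<mu>: "cmod \<mu> \<le> 1" and k: "k > 0"
    and recurrence: "\<And>m. m \<ge> N \<Longrightarrow> c m = \<mu> * c (m + k)"
    and m: "m \<ge> N"
  shows "c m = 0"
proof -
  have grow: "cmod (c m) \<le> cmod (c (m + j * k))" for j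
  proof (induction j)
    case (Suc j)
    have "cmod (c (m + j * k)) = cmod \<mu> * cmod (c (m + Suc j * k))"
      using recurrence[of "m + j * k"] m by (simp add: norm_mult algebra_simps)
    also have "\<dots> \<le> cmod (c (m + Suc j * k))"
      using \<mu> by (simp add: mult_left_le_one_le)
    finally show ?case using Suc.IH by simp
  qed simp
  have "strict_mono (\<lambda>j. m + j * k)" using k by (simp add: strict_mono_def)
  then have "(\<lambda>j. cmod (c (m + j * k))) \<longlonglongrightarrow> 0"
    using LIMSEQ_subseq_LIMSEQ[OF lim] by (simp add: o_def tendsto_norm_zero_iff)
  then have "cmod (c m) \<le> 0" using grow by (intro LIMSEQ_le_const) auto
  then show ?thesis by simp
qed

lemma contraction_eigenvalue_norm_le_1:
  assumes "contraction T" "has_eigenvalue T \<mu>"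
  shows "cmod \<mu> \<le> 1"
proof -
  obtain x where x: "x \<in> l2" "x \<noteq> vzero" and Tx: "T x = vscale \<mu> x"
    using assms(2) unfolding has_eigenvalue_def by blast
  have "cmod \<mu> * l2norm x \<le> l2norm x"
    using assms(1) x(1) l2norm_vscale[OF x(1), of \<mu>] unfolding contraction_def Tx[symmetric] by auto
  moreover have "l2norm x > 0"
    using l2norm_nonneg[OF x(1)] l2norm_eq_0[OF x(1)] x(2) by force
  ultimately show ?thesis by simp
qed

locale block_shift_operator =
  fixes n k :: nat and T :: op and e :: "nat \<Rightarrow> vec" and a :: "nat \<Rightarrow> nat \<Rightarrow> complex"
  assumes bounded: "bounded_linear_l2 T"
    and basis: "orthonormal_basis e"
    and head_columns: "\<forall>j\<le>n. T (e j) = (\<lambda>m. \<Sum>i\<le>n + k. a i j * e i m)"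
    and shift_columns: "\<forall>j\<ge>n + 1. T (e j) = e (j + k)"
begin

lemmas basis_l2 = orthonormal_basis_l2[OF basis]
  and basis_l2inner = orthonormal_basis_l2inner[OF basis]

lemma l2inner_head_column: "j \<le> n \<Longrightarrow> l2inner (T (e j)) (e m) = (if m \<le> n + k then a m j else 0)"
  using head_columns by (simp add: l2inner_lincomb_left basis_l2 basis_l2inner if_distrib cong: if_cong)

lemma l2inner_image_head_row:
  assumes "x \<in> l2" "m \<le> n + k"
  shows "l2inner (T x) (e m) = (\<Sum>j\<le>n. a m j * l2inner x (e j))"
proof (rule bounded_linear_l2_row[OF bounded basis _ _ assms(1)])
  show "l2inner (T (e j)) (e m) = (\<Sum>j'\<le>n. a m j' * l2inner (e j) (e j'))" for j
    using assms(2) shift_columns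
    by (cases "j \<le> n") (auto simp: l2inner_head_column basis_l2inner if_distrib cong: if_cong)
qed simp

lemma l2inner_image_shift_row:
  assumes "x \<in> l2" "m \<ge> n + 1"
  shows "l2inner (T x) (e (m + k)) = l2inner x (e m)"
proof -
  have "l2inner (T x) (e (m + k)) = (\<Sum>j'\<in>{m}. 1 * l2inner x (e j'))"
  proof (rule bounded_linear_l2_row[OF bounded basis _ _ assms(1)])
    show "l2inner (T (e j)) (e (m + k)) = (\<Sum>j'\<in>{m}. 1 * l2inner (e j) (e j'))" for j
      using assms(2) shift_columns by (cases "j \<le> n") (auto simp: l2inner_head_column basis_l2inner)
  qed simp
  then show ?thesis by simp
qed

lemma eigenvector_coefficient_beyond_head_eq_0:
  assumes "k \<ge> 1" "cmod \<mu> \<le> 1" "x \<in> l2" "T x = vscale \<mu> x" "m \<ge> n + 1"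
  shows "l2inner x (e m) = 0"
proof (rule null_sequence_shift_recurrence_eq_0[where c="\<lambda>m. l2inner x (e m)" and N="n + 1"])
  show "(\<lambda>m. l2inner x (e m)) \<longlonglongrightarrow> 0"
    by (rule orthonormal_basis_coefficients_tendsto_0[OF basis assms(3)])
  show "l2inner x (e m') = \<mu> * l2inner x (e (m' + k))" if "m' \<ge> n + 1" for m'
    using l2inner_image_shift_row[OF assms(3) that] assms(3,4) basis_l2
    by (simp add: l2inner_vscale_left)
qed (use assms in auto)

lemma image_head_vector:
  "T (\<lambda>m. \<Sum>r\<le>n. h r * e r m) = (\<lambda>m. \<Sum>i\<le>n + k. (\<Sum>r\<le>n. a i r * h r) * e i m)"
proof -
  have "T (\<lambda>m. \<Sum>r\<le>n. h r * e r m) = (\<lambda>m. \<Sum>r\<le>n. h r * (\<Sum>i\<le>n + k. a i r * e i m))"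
    using head_columns by (simp add: bounded_linear_l2_lincomb[OF bounded] basis_l2)
  also have "\<dots> = (\<lambda>m. \<Sum>i\<le>n + k. (\<Sum>r\<le>n. a i r * h r) * e i m)"
    by (intro ext) (simp add: sum_distrib_left sum_distrib_right mult_ac sum.swap[of _ "{..n}"])
  finally show ?thesis .
qed

lemma has_eigenvalue_of_head_eigenvector:
  assumes nonzero: "\<exists>r\<le>n. h r \<noteq> 0"
    and eigen: "\<forall>i\<le>n. (\<Sum>r\<le>n. a i r * h r) = \<mu> * h i"
    and rows: "\<forall>l\<in>{1..k}. (\<Sum>r\<le>n. a (n + l) r * h r) = 0"
  shows "has_eigenvalue T \<mu>"
proof -
  define x where "x = (\<lambda>m. \<Sum>r\<le>n. h r * e r m)"
  have x: "x \<in> l2" unfolding x_def by (simp add: l2_lincomb basis_l2)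
  have "x \<noteq> vzero"
  proof
    assume "x = vzero"
    obtain r where r: "r \<le> n" "h r \<noteq> 0" using nonzero by blast
    have "l2inner x (e r) = h r"
      unfolding x_def using r by (simp add: l2inner_lincomb_left basis_l2 basis_l2inner if_distrib cong: if_cong)
    then show False using r \<open>x = vzero\<close> by (simp add: l2inner_def vzero_def)
  qed
  moreover have "T x = vscale \<mu> x"
  proof -
    have "(\<Sum>r\<le>n. a i r * h r) = 0" if "i \<in> {n + 1..n + k}" for i
    proof -
      from that have "i - n \<in> {1..k}" "n + (i - n) = i" by auto
      then show ?thesis using rows by metis
    qed
    then have "(\<Sum>i\<le>n + k. (\<Sum>r\<le>n. a i r * h r) * e i m) = (\<Sum>i\<le>n. (\<Sum>r\<le>n. a i r * h r) * e i m)" for m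
      using sum.ub_add_nat[of 0 n "\<lambda>i. (\<Sum>r\<le>n. a i r * h r) * e i m" k] by (simp add: atLeast0AtMost)
    then show ?thesis
      unfolding x_def image_head_vector vscale_def using eigen
      by (simp add: sum_distrib_left mult.assoc)
  qed
  ultimately show ?thesis unfolding has_eigenvalue_def using x by blast
qed

lemma head_eigenvector_of_has_eigenvalue:
  assumes "contraction T" "k \<ge> 1" "has_eigenvalue T \<mu>"
  shows "\<exists>h. (\<exists>r\<le>n. h r \<noteq> 0) \<and> (\<forall>i\<le>n. (\<Sum>r\<le>n. a i r * h r) = \<mu> * h i) \<and>
    (\<forall>l\<in>{1..k}. (\<Sum>r\<le>n. a (n + l) r * h r) = 0)"
proof -
  obtain x where x: "x \<in> l2" "x \<noteq> vzero" and Tx: "T x = vscale \<mu> x"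
    using assms(3) unfolding has_eigenvalue_def by blast
  define c where "c j = l2inner x (e j)" for j
  have image: "l2inner (T x) (e m) = \<mu> * c m" for m
    unfolding Tx c_def using x basis_l2 by (simp add: l2inner_vscale_left)
  have tail: "c m = 0" if "m \<ge> n + 1" for m
    unfolding c_def using eigenvector_coefficient_beyond_head_eq_0[OF assms(2)
        contraction_eigenvalue_norm_le_1[OF assms(1,3)] x(1) Tx that] .
  show ?thesis
  proof (intro exI[of _ c] conjI)
    show "\<exists>r\<le>n. c r \<noteq> 0"
    proof (rule ccontr)
      assume "\<not> (\<exists>r\<le>n. c r \<noteq> 0)"
      then have "l2inner x (e j) = 0" for j
        using tail unfolding c_def by (cases "j \<le> n") auto
      then show False using orthonormal_basis_eq_vzero[OF basis x(1)] x(2) by blast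
    qed
    show "\<forall>i\<le>n. (\<Sum>r\<le>n. a i r * c r) = \<mu> * c i"
      using l2inner_image_head_row[OF x(1)] image unfolding c_def by simp
    show "\<forall>l\<in>{1..k}. (\<Sum>r\<le>n. a (n + l) r * c r) = 0"
    proof
      fix l assume "l \<in> {1..k}"
      then have "(\<Sum>r\<le>n. a (n + l) r * c r) = \<mu> * c (n + l)"
        using l2inner_image_head_row[OF x(1), of "n + l"] image unfolding c_def by simp
      also have "\<dots> = 0" using tail \<open>l \<in> {1..k}\<close> by simp
      finally show "(\<Sum>r\<le>n. a (n + l) r * c r) = 0" .
    qed
  qed
qed

lemma has_eigenvalue_iff:
  assumes "contraction T" "k \<ge> 1"
  shows "has_eigenvalue T \<mu> \<longleftrightarrow> (\<exists>h. (\<exists>r\<le>n. h r \<noteq> 0) \<and>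
    (\<forall>i\<le>n. (\<Sum>r\<le>n. a i r * h r) = \<mu> * h i) \<and> (\<forall>l\<in>{1..k}. (\<Sum>r\<le>n. a (n + l) r * h r) = 0))"
  by (rule iffI, erule head_eigenvector_of_has_eigenvalue[OF assms])
     (blast intro: has_eigenvalue_of_head_eigenvector)

end

theorem lemma4p1:
  fixes n k :: nat and T :: op and e :: "nat \<Rightarrow> vec" and a :: "nat \<Rightarrow> nat \<Rightarrow> complex"
  assumes "k \<ge> 1"
    and "contraction T" and "cnu T"
    and "defect_space T \<subseteq> defect_space_star T"
    and "finite_dim (defect_space_star T)"
    and "has_dim (defect_space T) (n + 1)"
    and "has_dim (ominus (defect_space_star T) (defect_space T)) k"
    and "orthonormal_basis e"
    and "\<forall>j\<le>n. T (e j) = (\<lambda>m. \<Sum>i\<le>n + k. a i j * e i m)"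
    and "\<forall>j\<ge>n + 1. T (e j) = e (j + k)"
  shows "(\<forall>c. c \<noteq> 0 \<longrightarrow> \<not> has_eigenvalue T c) \<longleftrightarrow>
    (\<forall>h :: nat \<Rightarrow> complex. \<forall>\<mu>. \<mu> \<noteq> 0 \<and> (\<exists>r\<le>n. h r \<noteq> 0) \<and>
        (\<forall>i\<le>n. (\<Sum>r\<le>n. a i r * h r) = \<mu> * h i)
      \<longrightarrow> (\<exists>l\<in>{1..k}. (\<Sum>r\<le>n. a (n + l) r * h r) \<noteq> 0))"
proof -
  interpret block_shift_operator n k T e a
    using assms(2,8-10) by unfold_locales (simp_all add: contraction_def)
  show ?thesis
    unfolding has_eigenvalue_iff[OF assms(2,1)] by blast
qed

end
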